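(* Let $a>0$ with $2a/\sqrt{3}<\pi/2$, and let $(T,g_{hex})$ be the singular torus defined below. Then the systole of $(T,g_{hex})$ equals $\min\{4a,\ 2\pi\cos(2a/\sqrt{3})\}$.
   Context: Let $\Delta\subset\mathbb{R}^2$ be the hexagonal lattice generated by $(2a,0)$ and $(a,a\sqrt3)$ (its Voronoi cells are regular hexagons of inradius $a$ and circumradius $2a/\sqrt3$). On $\mathbb{R}^3$ with coordinates $(x,y,z)$ consider the continuous Riemannian metric $h=dx^2+dy^2+\cos^2\!\big(\mathrm{dist}((x,y),\Delta)\big)\,dz^2$, where $\mathrm{dist}$ is the Euclidean distance in $\mathbb{R}^2$. The length of a piecewise smooth curve $\gamma$ is $\int (h(\gamma',\gamma'))^{1/2}dt$. $(T,g_{hex})$ is the quotient of $(\mathbb{R}^3,h)$ by the group generated by the translations $T_1:(x,y,z)\mapsto(x+4a,y,z)$, $T_2:(x,y,z)\mapsto(x+2a,y+2a\sqrt3,z)$, $T_3:(x,y,z)\mapsto(x,y,z+2\pi)$; $h$ descends to a metric $g_{hex}$. The systole is the infimum of the lengths of non-contractible piecewise smooth closed curves. *)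

theory Defs
  imports "HOL-Analysis.Analysis"
begin

definition hex_lattice :: "real \<Rightarrow> (real \<times> real) set" where
  "hex_lattice a = {(of_int i * (2 * a) + of_int j * a, of_int j * (a * sqrt 3)) | i j :: int. True}"

definition hex_speed :: "real \<Rightarrow> real \<times> real \<times> real \<Rightarrow> real \<times> real \<times> real \<Rightarrow> real" where
  "hex_speed a p v = (case p of (x, y, z) \<Rightarrow> case v of (dx, dy, dz) \<Rightarrow>
      sqrt (dx\<^sup>2 + dy\<^sup>2 + (cos (infdist (x, y) (hex_lattice a)))\<^sup>2 * dz\<^sup>2))"

definition piecewise_smooth :: "(real \<Rightarrow> real \<times> real \<times> real) \<Rightarrow> bool" where
  "piecewise_smooth \<gamma> \<longleftrightarrow>
     (\<exists>(n::nat) (t::nat \<Rightarrow> real). n > 0 \<and> t 0 = 0 \<and> t n = 1 \<and> (\<forall>i<n. t i < t (Suc i)) \<and>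
        (\<forall>i<n. \<exists>D. continuous_on {t i..t (Suc i)} D \<and>
           (\<forall>s\<in>{t i..t (Suc i)}. (\<gamma> has_vector_derivative D s) (at s within {t i..t (Suc i)}))))"

definition hex_length :: "real \<Rightarrow> (real \<Rightarrow> real \<times> real \<times> real) \<Rightarrow> real" where
  "hex_length a \<gamma> = integral {0..1} (\<lambda>t. hex_speed a (\<gamma> t) (vector_derivative \<gamma> (at t)))"

text \<open>The torus T = R^3 / <T1,T2,T3>, realised concretely as a subset of C^3
  via the covering map (x,y,z) \<mapsto> (e^{2 pi i u}, e^{2 pi i v}, e^{i z}),
  where (x,y) = u (4a,0) + v (2a, 2a sqrt 3).  This map induces a homeomorphism
  of the quotient R^3/Gamma onto its image.\<close>
definition torus_proj :: "real \<Rightarrow> real \<times> real \<times> real \<Rightarrow> complex \<times> complex \<times> complex" where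
  "torus_proj a p = (case p of (x, y, z) \<Rightarrow>
     (cis (2 * pi * ((x - y / sqrt 3) / (4 * a))),
      cis (2 * pi * (y / (2 * a * sqrt 3))),
      cis z))"

definition torus_space :: "real \<Rightarrow> (complex \<times> complex \<times> complex) set" where
  "torus_space a = range (torus_proj a)"

text \<open>A piecewise smooth closed curve in T is
  the projection of a piecewise smooth curve gamma in R^3 whose endpoints have the
  same image; its length is the h-length of gamma (independent of the lift since
  deck translations are h-isometries).\<close>
definition systole_hex :: "real \<Rightarrow> real" where
  "systole_hex a = Inf {hex_length a \<gamma> | \<gamma>.
      piecewise_smooth \<gamma> \<and>
      torus_proj a (\<gamma> 0) = torus_proj a (\<gamma> 1) \<and>
      \<not> homotopic_loops (torus_space a) (torus_proj a \<circ> \<gamma>)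
           (linepath (torus_proj a (\<gamma> 0)) (torus_proj a (\<gamma> 0)))}"

end

theory Submission
  imports Defs "HOL-Complex_Analysis.Complex_Analysis"
begin

text \<open>
  Upper bound: the horizontal loop of length 4a along a side of the fundamental domain and the
  vertical fibre over a vertex of the Voronoi tiling (at distance 2a/sqrt 3 from the lattice) are
  non-contractible, since one coordinate of their projection winds once around the origin.

  Lower bound by calibration: the end points of a lift of a non-contractible loop are distinct
  (closed lifts project to contractible loops) and differ by a deck translation
  (4am + 2an, 2a sqrt 3 n, 2 pi l).  If (m, n) \<noteq> 0 the horizontal displacement has length at
  least 4a, and the speed dominates the Euclidean speed of the (x, y)-projection.  Otherwise
  l \<noteq> 0, and since every point lies within 2a/sqrt 3 of the lattice, the speed dominates
  cos (2a/sqrt 3) |z'|, so the length is at least 2 pi cos (2a/sqrt 3).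
\<close>

lemma not_homotopic_loops_if_circle_image:
  fixes g :: "real \<Rightarrow> 'a::real_normed_vector"
  assumes "continuous_on S f" and "f \<in> S \<rightarrow> -{0}" and "\<And>t. f (g t) = cis (2 * pi * t)"
  shows "\<not> homotopic_loops S g (linepath p p)"
proof
  assume h: "homotopic_loops S g (linepath p p)"
  have "homotopic_loops (-{0}) (f \<circ> g) (f \<circ> linepath p p)"
    by (rule homotopic_loops_continuous_image[OF h assms(1,2)])
  moreover have "f \<circ> g = circlepath 0 1"
    using assms(3) by (auto simp: circlepath cis_conv_exp o_def mult_ac)
  moreover have "f \<circ> linepath p p = linepath (f p) (f p)"
    by (auto simp: linepath_def o_def algebra_simps)
  moreover have "f p \<noteq> 0"
    using homotopic_loops_imp_subset[OF h] assms(2) by (auto simp: path_image_def linepath_def)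
  ultimately have "winding_number (circlepath 0 1) 0 = winding_number (linepath (f p) (f p)) 0"
    using winding_number_homotopic_loops by metis
  then show False using \<open>f p \<noteq> 0\<close> by (simp add: winding_number_circlepath_centre)
qed

section \<open>Lengths of piecewise smooth curves\<close>

lemma hex_speed_alt: "hex_speed a p v = sqrt ((fst v)\<^sup>2 + (fst (snd v))\<^sup>2 +
   (cos (infdist (fst p, fst (snd p)) (hex_lattice a)))\<^sup>2 * (snd (snd v))\<^sup>2)"
  by (simp add: hex_speed_def split: prod.split)

lemma piecewise_smoothE:
  assumes "piecewise_smooth \<gamma>"
  obtains t n where "t 0 = 0" "t n = 1" "\<forall>i<n. t i < t (Suc i)"
    "\<And>i. i < n \<Longrightarrow> \<exists>D. continuous_on {t i..t (Suc i)} D \<and>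
        (\<forall>s\<in>{t i..t (Suc i)}. (\<gamma> has_vector_derivative D s) (at s within {t i..t (Suc i)}))"
  using assms unfolding piecewise_smooth_def by blast

lemma partition_induct:
  fixes t :: "nat \<Rightarrow> real"
  assumes "\<forall>i<n. t i < t (Suc i)" and "P (t 0)"
    and "\<And>k. k < n \<Longrightarrow> t 0 \<le> t k \<Longrightarrow> t k < t (Suc k) \<Longrightarrow> P (t k) \<Longrightarrow> P (t (Suc k))"
  shows "P (t n)"
proof -
  have "k \<le> n \<Longrightarrow> t 0 \<le> t k \<and> P (t k)" for k
  proof (induction k)
    case (Suc k)
    then have "k < n" "t 0 \<le> t k" "P (t k)" by auto
    moreover have "t k < t (Suc k)" using assms(1) \<open>k < n\<close> by blast
    ultimately show ?case using assms(3) by force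
  qed (use assms(2) in simp)
  then show ?thesis by simp
qed

lemma piecewise_smooth_continuous_on:
  assumes "piecewise_smooth \<gamma>"
  shows "continuous_on {0..1} \<gamma>"
proof -
  obtain n t where t: "t 0 = 0" "t n = 1" "\<forall>i<n. t i < t (Suc i)"
    and pieces: "\<And>i. i < n \<Longrightarrow> \<exists>D. continuous_on {t i..t (Suc i)} D \<and>
        (\<forall>s\<in>{t i..t (Suc i)}. (\<gamma> has_vector_derivative D s) (at s within {t i..t (Suc i)}))"
    using assms by (rule piecewise_smoothE) blast
  have "continuous_on {0..t n} \<gamma>"
  proof (rule partition_induct[OF t(3)])
    fix k assume k: "k < n" "t 0 \<le> t k" "t k < t (Suc k)" and IH: "continuous_on {0..t k} \<gamma>"
    have "continuous_on {t k..t (Suc k)} \<gamma>"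
      using pieces[OF k(1)] has_vector_derivative_continuous continuous_on_eq_continuous_within
      by blast
    moreover have "{0..t (Suc k)} = {0..t k} \<union> {t k..t (Suc k)}" using k t(1) by auto
    ultimately show "continuous_on {0..t (Suc k)} \<gamma>"
      using continuous_on_closed_Un[OF _ _ IH] by simp
  qed (simp add: t(1))
  then show ?thesis using t(2) by simp
qed

lemma smooth_piece_calibration:
  fixes \<gamma> :: "real \<Rightarrow> real \<times> real \<times> real" and \<phi> :: "real \<times> real \<times> real \<Rightarrow> real"
  assumes ab: "a' < b" and cD: "continuous_on {a'..b} D"
    and der: "\<And>s. s \<in> {a'..b} \<Longrightarrow> (\<gamma> has_vector_derivative D s) (at s within {a'..b})"
    and lin: "bounded_linear \<phi>" and bd: "\<And>p v. \<phi> v \<le> K * hex_speed a p v"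
  shows "(\<lambda>t. hex_speed a (\<gamma> t) (vector_derivative \<gamma> (at t))) integrable_on {a'..b} \<and>
         \<phi> (\<gamma> b) - \<phi> (\<gamma> a') \<le> K * integral {a'..b} (\<lambda>t. hex_speed a (\<gamma> t) (vector_derivative \<gamma> (at t)))"
proof -
  define h where "h s = hex_speed a (\<gamma> s) (D s)" for s
  have "continuous_on {a'..b} \<gamma>"
    using der has_vector_derivative_continuous continuous_on_eq_continuous_within by blast
  then have "continuous_on {a'..b} h"
    unfolding h_def hex_speed_alt by (intro continuous_intros cD continuous_on_fst continuous_on_snd)
  then have h_int: "(h has_integral integral {a'..b} h) {a'..b}"
    using integrable_continuous_real by blast
  \<comment> \<open>At the end points the two-sided derivative may not exist; they form a null set.\<close>
  have "hex_speed a (\<gamma> t) (vector_derivative \<gamma> (at t)) = h t" if "t \<in> box a' b" for t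
  proof -
    have "(\<gamma> has_vector_derivative D t) (at t)"
      using der[of t] that at_within_Icc_at[of a' t b] by auto
    then show ?thesis unfolding h_def by (simp add: vector_derivative_at)
  qed
  then have speed_int: "((\<lambda>t. hex_speed a (\<gamma> t) (vector_derivative \<gamma> (at t)))
      has_integral integral {a'..b} h) {a'..b}"
    using has_integral_spike_interior[of h _ a' b] h_int by auto
  have "((\<lambda>s. \<phi> (D s)) has_integral (\<phi> (\<gamma> b) - \<phi> (\<gamma> a'))) {a'..b}"
    by (rule fundamental_theorem_of_calculus[where f="\<lambda>s. \<phi> (\<gamma> s)"])
       (use ab der bounded_linear.has_vector_derivative[OF lin] in auto)
  then have "\<phi> (\<gamma> b) - \<phi> (\<gamma> a') \<le> K * integral {a'..b} h"
    by (rule has_integral_le[OF _ has_integral_mult_right[OF h_int]]) (simp add: h_def bd)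
  moreover have "integral {a'..b} (\<lambda>t. hex_speed a (\<gamma> t) (vector_derivative \<gamma> (at t)))
      = integral {a'..b} h"
    using speed_int by (rule integral_unique)
  ultimately show ?thesis using speed_int by auto
qed

lemma hex_length_calibration:
  fixes \<gamma> :: "real \<Rightarrow> real \<times> real \<times> real" and \<phi> :: "real \<times> real \<times> real \<Rightarrow> real"
  assumes "piecewise_smooth \<gamma>" and lin: "bounded_linear \<phi>"
    and bd: "\<And>p v. \<phi> v \<le> K * hex_speed a p v"
  shows "\<phi> (\<gamma> 1) - \<phi> (\<gamma> 0) \<le> K * hex_length a \<gamma>"
proof -
  define g where "g t = hex_speed a (\<gamma> t) (vector_derivative \<gamma> (at t))" for t
  obtain n t where t: "t 0 = 0" "t n = 1" "\<forall>i<n. t i < t (Suc i)"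
    and pieces: "\<And>i. i < n \<Longrightarrow> \<exists>D. continuous_on {t i..t (Suc i)} D \<and>
        (\<forall>s\<in>{t i..t (Suc i)}. (\<gamma> has_vector_derivative D s) (at s within {t i..t (Suc i)}))"
    using assms(1) by (rule piecewise_smoothE) blast
  have "g integrable_on {0..t n} \<and> \<phi> (\<gamma> (t n)) - \<phi> (\<gamma> 0) \<le> K * integral {0..t n} g"
  proof (rule partition_induct[OF t(3)])
    fix k assume k: "k < n" "t 0 \<le> t k" "t k < t (Suc k)"
      and IH: "g integrable_on {0..t k} \<and> \<phi> (\<gamma> (t k)) - \<phi> (\<gamma> 0) \<le> K * integral {0..t k} g"
    have piece: "g integrable_on {t k..t (Suc k)} \<and>
        \<phi> (\<gamma> (t (Suc k))) - \<phi> (\<gamma> (t k)) \<le> K * integral {t k..t (Suc k)} g"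
      using pieces[OF k(1)] smooth_piece_calibration[OF k(3) _ _ lin bd] unfolding g_def by blast
    have le: "0 \<le> t k" "t k \<le> t (Suc k)" using k t(1) by auto
    have int: "g integrable_on {0..t (Suc k)}"
      using Henstock_Kurzweil_Integration.integrable_combine[OF le] IH piece by blast
    have "integral {0..t (Suc k)} g = integral {0..t k} g + integral {t k..t (Suc k)} g"
      using Henstock_Kurzweil_Integration.integral_combine[OF le int] by simp
    then show "g integrable_on {0..t (Suc k)} \<and>
        \<phi> (\<gamma> (t (Suc k))) - \<phi> (\<gamma> 0) \<le> K * integral {0..t (Suc k)} g"
      using int IH piece by (simp add: distrib_left)
  qed (use integrable_on_refl[of g 0] t(1) in simp)
  then show ?thesis using t unfolding hex_length_def g_def by simp
qed

lemma piecewise_smooth_linear_path: "piecewise_smooth (\<lambda>t. p + t *\<^sub>R v)"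
  unfolding piecewise_smooth_def
  by (auto intro!: exI[of _ 1] exI[of _ real] exI[of _ "\<lambda>_. v"] derivative_eq_intros)

lemma hex_length_linear_path:
  assumes "\<And>t. hex_speed a (p + t *\<^sub>R v) v = c"
  shows "hex_length a (\<lambda>t. p + t *\<^sub>R v) = c"
proof -
  have "vector_derivative (\<lambda>t. p + t *\<^sub>R v) (at t) = v" for t
    by (rule vector_derivative_at) (auto intro!: derivative_eq_intros)
  then show ?thesis unfolding hex_length_def by (simp add: assms)
qed

section \<open>Distance to the hexagonal lattice\<close>

lemma in_hex_lattice: "(of_int i * (2 * a) + of_int j * a, of_int j * (a * sqrt 3)) \<in> hex_lattice a"
  unfolding hex_lattice_def by blast

lemma dist_real_pair: "dist (x::real, y::real) (u, v) = sqrt ((x - u)\<^sup>2 + (y - v)\<^sup>2)"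
  by (simp add: dist_Pair_Pair dist_real_def)

lemma sum_squares_le_covering_radius:
  fixes s e a :: real
  assumes "0 \<le> s" "s \<le> a" "0 \<le> e" "s + sqrt 3 * e \<le> 2 * a"
  shows "s\<^sup>2 + e\<^sup>2 \<le> (2 * a / sqrt 3)\<^sup>2"
proof -
  have "(sqrt 3 * e)\<^sup>2 \<le> (2 * a - s)\<^sup>2"
    by (rule power_mono) (use assms in auto)
  then have "3 * e\<^sup>2 \<le> (2 * a - s)\<^sup>2" by (simp add: power_mult_distrib)
  moreover have "s * s \<le> a * s" using assms by (simp add: mult_right_mono)
  moreover have "(2 * a / sqrt 3)\<^sup>2 = 4 * a\<^sup>2 / 3" by (simp add: power_divide power_mult_distrib)
  ultimately show ?thesis by (simp add: power2_eq_square algebra_simps)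
qed

lemma infdist_hex_lattice_le:
  fixes a :: real
  assumes a: "a > 0"
  shows "infdist p (hex_lattice a) \<le> 2 * a / sqrt 3"
proof -
  obtain x y where p: "p = (x, y)" by (cases p)
  define h where "h = a * sqrt 3"
  have s3h: "sqrt 3 * h = 3 * a" by (simp add: h_def)
  define j where "j = \<lfloor>y / h\<rfloor>"
  define e where "e = y - of_int j * h"
  have "of_int j \<le> y / h" "y / h < of_int j + 1" unfolding j_def by linarith+
  then have e: "0 \<le> e" "e < h" unfolding e_def using a by (auto simp: field_simps h_def)
  define i where "i = \<lfloor>(x - a * of_int j + a) / (2 * a)\<rfloor>"
  define \<xi> where "\<xi> = x - a * of_int j - 2 * a * of_int i"
  have "of_int i \<le> (x - a * of_int j + a) / (2 * a)" "(x - a * of_int j + a) / (2 * a) < of_int i + 1"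
    unfolding i_def by linarith+
  then have \<xi>: "- a \<le> \<xi>" "\<xi> < a" unfolding \<xi>_def using a by (auto simp: field_simps)
  have close: "infdist p (hex_lattice a) \<le> 2 * a / sqrt 3"
    if "q \<in> hex_lattice a" "dist p q = sqrt (s\<^sup>2 + t\<^sup>2)"
      "0 \<le> s" "s \<le> a" "0 \<le> t" "s + sqrt 3 * t \<le> 2 * a" for q s t
  proof -
    have "dist p q \<le> 2 * a / sqrt 3"
      using that sum_squares_le_covering_radius[of s a t] a by (simp add: real_le_lsqrt)
    then show ?thesis by (rule infdist_le2[OF that(1)])
  qed
  let ?q = "\<lambda>i j. (of_int i * (2 * a) + of_int j * a, of_int j * (a * sqrt 3))"
  have d0: "dist p (?q i j) = sqrt (\<bar>\<xi>\<bar>\<^sup>2 + e\<^sup>2)"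
    unfolding p dist_real_pair \<xi>_def e_def h_def by (simp add: algebra_simps)
  \<comment> \<open>p = ?q i j + (\<xi>, e); the lines \<plusminus>\<xi> + sqrt 3 e = 2a are Voronoi edges, and on either
    side of them one of three nearby lattice points is within the covering radius.\<close>
  consider "0 \<le> \<xi>" "\<xi> + sqrt 3 * e \<le> 2 * a" | "0 \<le> \<xi>" "\<xi> + sqrt 3 * e > 2 * a"
    | "\<xi> < 0" "- \<xi> + sqrt 3 * e \<le> 2 * a" | "\<xi> < 0" "- \<xi> + sqrt 3 * e > 2 * a"
    by linarith
  then show ?thesis
  proof cases
    case 1
    then show ?thesis using close[OF in_hex_lattice d0] \<xi> e by simp
  next
    case 2
    have "dist p (?q i (j + 1)) = sqrt ((a - \<xi>)\<^sup>2 + (h - e)\<^sup>2)"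
      unfolding p dist_real_pair \<xi>_def e_def h_def by (simp add: algebra_simps power2_commute)
    from close[OF in_hex_lattice this] show ?thesis using 2 \<xi> e s3h by (simp add: algebra_simps)
  next
    case 3
    then show ?thesis using close[OF in_hex_lattice d0] \<xi> e by simp
  next
    case 4
    have "dist p (?q (i - 1) (j + 1)) = sqrt ((a + \<xi>)\<^sup>2 + (h - e)\<^sup>2)"
      unfolding p dist_real_pair \<xi>_def e_def h_def by (simp add: algebra_simps power2_commute)
    from close[OF in_hex_lattice this] show ?thesis using 4 \<xi> e s3h by (simp add: algebra_simps)
  qed
qed

lemma cos_infdist_hex_lattice_ge:
  assumes "a > 0" and "2 * a / sqrt 3 \<le> pi"
  shows "cos (2 * a / sqrt 3) \<le> cos (infdist p (hex_lattice a))"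
  using assms infdist_hex_lattice_le[OF assms(1)] infdist_nonneg
  by (intro cos_monotone_0_pi_le) auto

lemma cos_covering_radius_nonneg:
  assumes "a > 0" and "2 * a / sqrt 3 \<le> pi / 2"
  shows "0 \<le> cos (2 * a / sqrt 3)"
proof -
  have "0 < 2 * a / sqrt 3" using assms(1) by simp
  then show ?thesis using assms(2) by (intro cos_ge_zero) linarith+
qed

lemma int_vertex_form_ge_4: "3 * (1 - 2 * i - j)\<^sup>2 + (1 - 3 * j)\<^sup>2 \<ge> (4::int)"
proof -
  consider "j = 0" | "j = 1" | "j \<ge> 2" | "j \<le> -1" by linarith
  then show ?thesis
  proof cases
    case 1
    have "1 - 2 * i \<noteq> 0" by presburger
    then have "(1 - 2 * i)\<^sup>2 \<ge> 1"
      by (metis int_one_le_iff_zero_less zero_less_power2)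
    then show ?thesis using 1 by simp
  next
    case 3
    have "(3 * j - 1)\<^sup>2 \<ge> 5\<^sup>2" by (rule power_mono) (use 3 in auto)
    then show ?thesis by (simp add: power2_commute add_increasing)
  next
    case 4
    have "(1 - 3 * j)\<^sup>2 \<ge> 4\<^sup>2" by (rule power_mono) (use 4 in auto)
    then show ?thesis by (simp add: add_increasing)
  qed simp
qed

text \<open>(a, a/sqrt 3) is a vertex of the Voronoi tiling, so the covering radius is attained there.\<close>

lemma infdist_hex_lattice_vertex:
  fixes a :: real
  assumes a: "a > 0"
  shows "infdist (a, a / sqrt 3) (hex_lattice a) = 2 * a / sqrt 3"
proof (rule antisym)
  have ne: "hex_lattice a \<noteq> {}" using in_hex_lattice by blast
  have "2 * a / sqrt 3 \<le> dist (a, a / sqrt 3) q" if q_in: "q \<in> hex_lattice a" for q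
  proof -
    obtain i j :: int where q: "q = (of_int i * (2 * a) + of_int j * a, of_int j * (a * sqrt 3))"
      using q_in unfolding hex_lattice_def by blast
    have Q: "real_of_int (3 * (1 - 2 * i - j)\<^sup>2 + (1 - 3 * j)\<^sup>2) \<ge> 4"
      using int_vertex_form_ge_4[of i j] by linarith
    have e1: "(a - (of_int i * (2 * a) + of_int j * a))\<^sup>2 = a\<^sup>2 * (real_of_int (1 - 2 * i - j))\<^sup>2"
      by (simp add: power2_eq_square algebra_simps)
    have e2: "(a / sqrt 3 - of_int j * (a * sqrt 3))\<^sup>2 = a\<^sup>2 * (real_of_int (1 - 3 * j))\<^sup>2 / 3"
      by (simp add: power2_eq_square field_simps)
    have "(2 * a / sqrt 3)\<^sup>2 = a\<^sup>2 * 4 / 3" by (simp add: power_divide power_mult_distrib)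
    also have "\<dots> \<le> a\<^sup>2 * real_of_int (3 * (1 - 2 * i - j)\<^sup>2 + (1 - 3 * j)\<^sup>2) / 3"
      using Q a by (intro divide_right_mono mult_left_mono) auto
    also have "\<dots> = (a - (of_int i * (2 * a) + of_int j * a))\<^sup>2 + (a / sqrt 3 - of_int j * (a * sqrt 3))\<^sup>2"
      unfolding e1 e2 by (simp add: algebra_simps)
    finally show ?thesis unfolding q dist_real_pair by (rule real_le_rsqrt)
  qed
  then show "2 * a / sqrt 3 \<le> infdist (a, a / sqrt 3) (hex_lattice a)"
    unfolding infdist_notempty[OF ne] by (intro cINF_greatest ne) auto
qed (rule infdist_hex_lattice_le[OF a])

lemma hex_speed_ge_horizontal: "sqrt ((fst v)\<^sup>2 + (fst (snd v))\<^sup>2) \<le> hex_speed a p v"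
  unfolding hex_speed_alt by simp

lemma hex_speed_ge_vertical:
  assumes "a > 0" and "2 * a / sqrt 3 \<le> pi"
  shows "cos (2 * a / sqrt 3) * \<bar>snd (snd v)\<bar> \<le> hex_speed a p v"
proof -
  let ?d = "infdist (fst p, fst (snd p)) (hex_lattice a)"
  have "cos (2 * a / sqrt 3) * \<bar>snd (snd v)\<bar> \<le> \<bar>cos ?d\<bar> * \<bar>snd (snd v)\<bar>"
    using cos_infdist_hex_lattice_ge[OF assms, of "(fst p, fst (snd p))"] abs_ge_self
    by (intro mult_right_mono) (fastforce intro: order_trans)+
  also have "\<dots> = sqrt ((cos ?d)\<^sup>2 * (snd (snd v))\<^sup>2)" by (simp add: real_sqrt_mult)
  also have "\<dots> \<le> hex_speed a p v" unfolding hex_speed_alt by simp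
  finally show ?thesis .
qed

lemma cauchy_schwarz_2: "u1 * v1 + u2 * v2 \<le> sqrt (u1\<^sup>2 + u2\<^sup>2) * sqrt (v1\<^sup>2 + v2\<^sup>2)"
  using norm_cauchy_schwarz[of "(u1, u2)" "(v1, v2)"] by (simp add: norm_Pair)

lemma hex_length_ge_horizontal_displacement:
  assumes "piecewise_smooth \<gamma>"
  shows "sqrt ((fst (\<gamma> 1) - fst (\<gamma> 0))\<^sup>2 + (fst (snd (\<gamma> 1)) - fst (snd (\<gamma> 0)))\<^sup>2) \<le> hex_length a \<gamma>"
proof -
  define w1 where "w1 = fst (\<gamma> 1) - fst (\<gamma> 0)"
  define w2 where "w2 = fst (snd (\<gamma> 1)) - fst (snd (\<gamma> 0))"
  define K where "K = sqrt (w1\<^sup>2 + w2\<^sup>2)"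
  have "bounded_linear (\<lambda>v::real \<times> real \<times> real. w1 * fst v + w2 * fst (snd v))"
    by (intro bounded_linear_intros)
  moreover have "w1 * fst v + w2 * fst (snd v) \<le> K * hex_speed a p v" for p v
  proof -
    have "w1 * fst v + w2 * fst (snd v) \<le> K * sqrt ((fst v)\<^sup>2 + (fst (snd v))\<^sup>2)"
      unfolding K_def by (rule cauchy_schwarz_2)
    also have "\<dots> \<le> K * hex_speed a p v"
      unfolding K_def by (intro mult_left_mono hex_speed_ge_horizontal) simp
    finally show ?thesis .
  qed
  ultimately have "w1 * fst (\<gamma> 1) + w2 * fst (snd (\<gamma> 1)) - (w1 * fst (\<gamma> 0) + w2 * fst (snd (\<gamma> 0)))
      \<le> K * hex_length a \<gamma>"
    by (rule hex_length_calibration[OF assms])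
  moreover have "w1 * fst (\<gamma> 1) + w2 * fst (snd (\<gamma> 1)) - (w1 * fst (\<gamma> 0) + w2 * fst (snd (\<gamma> 0)))
      = w1\<^sup>2 + w2\<^sup>2"
    by (simp add: w1_def w2_def power2_eq_square algebra_simps)
  also have "\<dots> = K * K" unfolding K_def by simp
  ultimately have "K * K \<le> K * hex_length a \<gamma>" by simp
  moreover have "0 \<le> hex_length a \<gamma>"
    using hex_length_calibration[OF assms, of "\<lambda>_. 0" 1 a] by (simp add: hex_speed_alt)
  moreover have "K \<ge> 0" unfolding K_def by simp
  ultimately have "K \<le> hex_length a \<gamma>"
    by (cases "K = 0") (auto intro: mult_left_le_imp_le)
  then show ?thesis unfolding K_def w1_def w2_def .
qed

lemma hex_length_ge_vertical_displacement:
  assumes "piecewise_smooth \<gamma>" and "a > 0" and "2 * a / sqrt 3 \<le> pi / 2"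
  shows "cos (2 * a / sqrt 3) * \<bar>snd (snd (\<gamma> 1)) - snd (snd (\<gamma> 0))\<bar> \<le> hex_length a \<gamma>"
proof -
  define c where "c = cos (2 * a / sqrt 3)"
  define \<sigma> where "\<sigma> = sgn (snd (snd (\<gamma> 1)) - snd (snd (\<gamma> 0)))"
  have "c \<ge> 0" unfolding c_def using assms(2,3) by (rule cos_covering_radius_nonneg)
  have "2 * a / sqrt 3 \<le> pi" using assms(3) pi_gt_zero by linarith
  have "bounded_linear (\<lambda>v::real \<times> real \<times> real. \<sigma> * c * snd (snd v))"
    by (intro bounded_linear_intros)
  moreover have "\<sigma> * c * snd (snd v) \<le> 1 * hex_speed a p v" for p v
  proof -
    have "\<sigma> * c * snd (snd v) \<le> c * \<bar>snd (snd v)\<bar>"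
      using \<open>c \<ge> 0\<close> by (simp add: \<sigma>_def sgn_real_def abs_real_def mult_le_0_iff)
    also have "\<dots> \<le> hex_speed a p v"
      unfolding c_def using assms(2) \<open>2 * a / sqrt 3 \<le> pi\<close> by (rule hex_speed_ge_vertical)
    finally show ?thesis by simp
  qed
  ultimately have "\<sigma> * c * snd (snd (\<gamma> 1)) - \<sigma> * c * snd (snd (\<gamma> 0)) \<le> 1 * hex_length a \<gamma>"
    by (rule hex_length_calibration[OF assms(1)])
  then show ?thesis by (simp add: c_def \<sigma>_def sgn_real_def abs_real_def algebra_simps split: if_splits)
qed

section \<open>Deck transformations and the systole\<close>

lemma cis_eq_imp_int_multiple: "cis A = cis B \<Longrightarrow> \<exists>n::int. A = B + 2 * pi * of_int n"
  using sin_cos_eq_iff[of A B] by (auto simp: complex_eq_iff)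

lemma torus_proj_eq_imp_deck_translation:
  assumes "a \<noteq> 0" and "torus_proj a p = torus_proj a q"
  shows "\<exists>(m::int) (n::int) (l::int). fst q - fst p = 4 * a * m + 2 * a * n \<and>
           fst (snd q) - fst (snd p) = 2 * a * sqrt 3 * n \<and> snd (snd q) - snd (snd p) = 2 * pi * l"
proof -
  obtain x0 y0 z0 x1 y1 z1 where pq: "p = (x0, y0, z0)" "q = (x1, y1, z1)" by (cases p, cases q) auto
  have turns: "\<exists>k::int. A = B + k" if eq: "cis (2 * pi * A) = cis (2 * pi * B)" for A B
  proof -
    obtain k :: int where "2 * pi * A = 2 * pi * B + 2 * pi * k"
      using cis_eq_imp_int_multiple[OF eq] by blast
    then have "2 * pi * A = 2 * pi * (B + k)" by (simp add: distrib_left)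
    then show ?thesis by auto
  qed
  obtain m :: int where "(x1 - y1 / sqrt 3) / (4 * a) = (x0 - y0 / sqrt 3) / (4 * a) + m"
    using turns[of "(x1 - y1 / sqrt 3) / (4 * a)" "(x0 - y0 / sqrt 3) / (4 * a)"] assms(2)
    by (auto simp: pq torus_proj_def)
  then have m: "x1 - y1 / sqrt 3 = x0 - y0 / sqrt 3 + 4 * a * m"
    using assms(1) by (simp add: field_simps)
  obtain n :: int where "y1 / (2 * a * sqrt 3) = y0 / (2 * a * sqrt 3) + n"
    using turns[of "y1 / (2 * a * sqrt 3)" "y0 / (2 * a * sqrt 3)"] assms(2)
    by (auto simp: pq torus_proj_def)
  then have n: "y1 - y0 = 2 * a * sqrt 3 * n"
    using assms(1) by (simp add: field_simps)
  obtain l :: int where l: "z1 = z0 + 2 * pi * l"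
    using cis_eq_imp_int_multiple[of z1 z0] assms(2) by (auto simp: pq torus_proj_def)
  have "(y1 - y0) / sqrt 3 = 2 * a * n" using n by simp
  then have "x1 - x0 = 4 * a * m + 2 * a * n"
    using m by (simp add: diff_divide_distrib algebra_simps)
  then show ?thesis using n l pq by auto
qed

lemma continuous_on_torus_proj: "a \<noteq> 0 \<Longrightarrow> continuous_on UNIV (torus_proj a)"
  unfolding torus_proj_def split_def by (intro continuous_intros) auto

lemma homotopic_loops_torus_proj_closed_lift:
  assumes "a \<noteq> 0" and "piecewise_smooth \<gamma>" and "\<gamma> 0 = \<gamma> 1"
  shows "homotopic_loops (torus_space a) (torus_proj a \<circ> \<gamma>)
           (linepath (torus_proj a (\<gamma> 0)) (torus_proj a (\<gamma> 0)))"
proof -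
  have "path \<gamma>" using piecewise_smooth_continuous_on[OF assms(2)] by (simp add: path_def)
  then have "homotopic_loops UNIV \<gamma> (linepath (\<gamma> 0) (\<gamma> 0))"
    using assms(3) by (intro homotopic_loops_linear) (auto simp: pathstart_def pathfinish_def)
  then have "homotopic_loops (torus_space a) (torus_proj a \<circ> \<gamma>) (torus_proj a \<circ> linepath (\<gamma> 0) (\<gamma> 0))"
    by (rule homotopic_loops_continuous_image[OF _ continuous_on_torus_proj[OF assms(1)]])
       (auto simp: torus_space_def)
  moreover have "torus_proj a \<circ> linepath (\<gamma> 0) (\<gamma> 0) = linepath (torus_proj a (\<gamma> 0)) (torus_proj a (\<gamma> 0))"
    by (auto simp: linepath_def o_def algebra_simps)
  ultimately show ?thesis by simp
qed

definition noncontractible_hex_loop :: "real \<Rightarrow> (real \<Rightarrow> real \<times> real \<times> real) \<Rightarrow> bool" where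
  "noncontractible_hex_loop a \<gamma> \<longleftrightarrow> piecewise_smooth \<gamma> \<and> torus_proj a (\<gamma> 0) = torus_proj a (\<gamma> 1) \<and>
     \<not> homotopic_loops (torus_space a) (torus_proj a \<circ> \<gamma>)
         (linepath (torus_proj a (\<gamma> 0)) (torus_proj a (\<gamma> 0)))"

lemma systole_hex_eq_Inf: "systole_hex a = Inf {hex_length a \<gamma> | \<gamma>. noncontractible_hex_loop a \<gamma>}"
  by (simp add: systole_hex_def noncontractible_hex_loop_def)

lemma int_hex_form_ge_4:
  fixes m n :: int
  assumes "m \<noteq> 0 \<or> n \<noteq> 0"
  shows "(2 * m + n)\<^sup>2 + 3 * n\<^sup>2 \<ge> 4"
proof (cases "n = 0")
  case True
  then have "m \<noteq> 0" using assms by simp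
  then have "m\<^sup>2 \<ge> 1" by (metis int_one_le_iff_zero_less zero_less_power2)
  then show ?thesis using True by (simp add: power_mult_distrib)
next
  case False
  then have n1: "n\<^sup>2 \<ge> 1" by (metis int_one_le_iff_zero_less zero_less_power2)
  show ?thesis
  proof (cases "2 * m + n = 0")
    case True
    then have "n = - 2 * m" by simp
    then have "n\<^sup>2 = 4 * m\<^sup>2" by (simp add: power_mult_distrib)
    then show ?thesis using n1 True by simp
  next
    case False
    then have "(2 * m + n)\<^sup>2 \<ge> 1" by (metis int_one_le_iff_zero_less zero_less_power2)
    then show ?thesis using n1 by simp
  qed
qed

lemma hex_length_noncontractible_ge:
  assumes a: "a > 0" and R: "2 * a / sqrt 3 \<le> pi / 2" and loop: "noncontractible_hex_loop a \<gamma>"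
  shows "min (4 * a) (2 * pi * cos (2 * a / sqrt 3)) \<le> hex_length a \<gamma>"
proof -
  have ps: "piecewise_smooth \<gamma>" using loop by (simp add: noncontractible_hex_loop_def)
  have "\<gamma> 0 \<noteq> \<gamma> 1"
    using loop homotopic_loops_torus_proj_closed_lift[of a \<gamma>] a by (auto simp: noncontractible_hex_loop_def)
  obtain m n l :: int where
    dx: "fst (\<gamma> 1) - fst (\<gamma> 0) = 4 * a * m + 2 * a * n" and
    dy: "fst (snd (\<gamma> 1)) - fst (snd (\<gamma> 0)) = 2 * a * sqrt 3 * n" and
    dz: "snd (snd (\<gamma> 1)) - snd (snd (\<gamma> 0)) = 2 * pi * l"
    using torus_proj_eq_imp_deck_translation[of a "\<gamma> 0" "\<gamma> 1"] a loop
    by (auto simp: noncontractible_hex_loop_def)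
  show ?thesis
  proof (cases "m \<noteq> 0 \<or> n \<noteq> 0")
    case True
    have "(fst (\<gamma> 1) - fst (\<gamma> 0))\<^sup>2 + (fst (snd (\<gamma> 1)) - fst (snd (\<gamma> 0)))\<^sup>2
        = 4 * a\<^sup>2 * of_int ((2 * m + n)\<^sup>2 + 3 * n\<^sup>2)"
      unfolding dx dy by (simp add: power2_eq_square algebra_simps)
    also have "\<dots> \<ge> 4 * a\<^sup>2 * 4"
      using int_hex_form_ge_4[OF True] by (intro mult_left_mono) (linarith, simp)
    finally have "4 * a \<le> sqrt ((fst (\<gamma> 1) - fst (\<gamma> 0))\<^sup>2 + (fst (snd (\<gamma> 1)) - fst (snd (\<gamma> 0)))\<^sup>2)"
      by (intro real_le_rsqrt) (simp add: power2_eq_square)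
    then show ?thesis using hex_length_ge_horizontal_displacement[OF ps, of a] by linarith
  next
    case False
    then have "l \<noteq> 0" using \<open>\<gamma> 0 \<noteq> \<gamma> 1\<close> dx dy dz by (auto simp: prod_eq_iff)
    have "0 \<le> cos (2 * a / sqrt 3)" using a R by (rule cos_covering_radius_nonneg)
    moreover have "2 * pi \<le> \<bar>snd (snd (\<gamma> 1)) - snd (snd (\<gamma> 0))\<bar>"
      using \<open>l \<noteq> 0\<close> unfolding dz by (simp add: abs_mult)
    ultimately have "cos (2 * a / sqrt 3) * (2 * pi)
        \<le> cos (2 * a / sqrt 3) * \<bar>snd (snd (\<gamma> 1)) - snd (snd (\<gamma> 0))\<bar>"
      by (metis mult_left_mono)
    then have "2 * pi * cos (2 * a / sqrt 3) \<le> hex_length a \<gamma>"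
      using hex_length_ge_vertical_displacement[OF ps a R] by (simp add: mult.commute)
    then show ?thesis by simp
  qed
qed

lemma noncontractible_hex_loop_horizontal:
  assumes "a > 0"
  shows "noncontractible_hex_loop a (\<lambda>t. t *\<^sub>R (4 * a, 0, 0))"
  unfolding noncontractible_hex_loop_def
proof (intro conjI)
  let ?g = "\<lambda>t::real. t *\<^sub>R (4 * a, 0::real, 0::real)"
  show "piecewise_smooth ?g"
    using piecewise_smooth_linear_path[of 0 "(4 * a, 0, 0)"] by (simp only: add_0_left)
  show "torus_proj a (?g 0) = torus_proj a (?g 1)"
    using assms by (simp add: torus_proj_def)
  show "\<not> homotopic_loops (torus_space a) (torus_proj a \<circ> ?g) (linepath (torus_proj a (?g 0)) (torus_proj a (?g 0)))"
    by (rule not_homotopic_loops_if_circle_image[of _ fst])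
       (use assms in \<open>auto simp: torus_space_def torus_proj_def mult_ac intro!: continuous_intros\<close>)
qed

lemma noncontractible_hex_loop_vertical:
  "noncontractible_hex_loop a (\<lambda>t. (x, y, 0) + t *\<^sub>R (0, 0, 2 * pi))"
  unfolding noncontractible_hex_loop_def
proof (intro conjI)
  let ?g = "\<lambda>t::real. (x, y, 0::real) + t *\<^sub>R (0::real, 0::real, 2 * pi)"
  show "piecewise_smooth ?g"
    by (rule piecewise_smooth_linear_path)
  show "torus_proj a (?g 0) = torus_proj a (?g 1)"
    by (simp add: torus_proj_def)
  show "\<not> homotopic_loops (torus_space a) (torus_proj a \<circ> ?g) (linepath (torus_proj a (?g 0)) (torus_proj a (?g 0)))"
    by (rule not_homotopic_loops_if_circle_image[of _ "\<lambda>q. snd (snd q)"])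
       (auto simp: torus_space_def torus_proj_def mult.commute intro!: continuous_intros)
qed

lemma hex_length_horizontal_loop:
  assumes "a > 0"
  shows "hex_length a (\<lambda>t. t *\<^sub>R (4 * a, 0, 0)) = 4 * a"
  using hex_length_linear_path[of a 0 "(4 * a, 0, 0)" "4 * a"] assms
  by (simp add: hex_speed_def power_mult_distrib real_sqrt_mult)

lemma hex_length_vertical_loop_at_vertex:
  assumes "a > 0" and "2 * a / sqrt 3 \<le> pi / 2"
  shows "hex_length a (\<lambda>t. (a, a / sqrt 3, 0) + t *\<^sub>R (0, 0, 2 * pi)) = 2 * pi * cos (2 * a / sqrt 3)"
  using cos_covering_radius_nonneg[OF assms]
  by (intro hex_length_linear_path)
     (simp add: hex_speed_def infdist_hex_lattice_vertex[OF assms(1)] real_sqrt_mult)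

theorem mainTheorem3:
  fixes a :: real
  assumes "a > 0" and "2 * a / sqrt 3 < pi / 2"
  shows "systole_hex a = min (4 * a) (2 * pi * cos (2 * a / sqrt 3))"
proof -
  have R: "2 * a / sqrt 3 \<le> pi / 2" using assms(2) by simp
  let ?S = "{hex_length a \<gamma> | \<gamma>. noncontractible_hex_loop a \<gamma>}"
  have "4 * a \<in> ?S"
    using noncontractible_hex_loop_horizontal[OF assms(1)] hex_length_horizontal_loop[OF assms(1)]
    by (metis (mono_tags, lifting) mem_Collect_eq)
  moreover have "2 * pi * cos (2 * a / sqrt 3) \<in> ?S"
    using noncontractible_hex_loop_vertical[of a a "a / sqrt 3"]
      hex_length_vertical_loop_at_vertex[OF assms(1) R]
    by (metis (mono_tags, lifting) mem_Collect_eq)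
  ultimately have "min (4 * a) (2 * pi * cos (2 * a / sqrt 3)) \<in> ?S"
    by (simp add: min_def)
  moreover have "min (4 * a) (2 * pi * cos (2 * a / sqrt 3)) \<le> L" if "L \<in> ?S" for L
    using that hex_length_noncontractible_ge[OF assms(1) R] by blast
  ultimately show ?thesis
    unfolding systole_hex_eq_Inf by (rule cInf_eq_minimum)
qed

end
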